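(* Let $A/B\ne 1/0$ be a convergent of $\theta$, and let $[c_0;c_1,\dots,c_m]$ be any finite continued fraction expansion of the rational number $A/B$ (with $c_0\ge1$ and $c_i\ge1$). Then $\lambda(|A-B\theta|)=c_0+c_1+\cdots+c_m$. Also $\lambda(|1-0\cdot\theta|)=0$.
   Context: Fix an irrational $\theta$ with $1<\theta<2$. Let $S(\theta)=\{i+j\theta : i,j\in\mathbb{N}_0\}$ and let $s_0<s_1<s_2<\cdots$ be its elements in increasing order. Put $\delta(n)=s_{n+1}-s_n$. Let $\lambda$ be the map from the set of values $\{\delta(n):n\ge0\}$ to $\mathbb{N}_0$ that numbers the distinct values in order of first occurrence: $\lambda(\delta(0))=0$, and the $m$-th distinct value to appear in the sequence $\delta(0),\delta(1),\dots$ (counting from $m=0$) receives label $m$. Write $\theta=[t_0;t_1,t_2,\dots]$ (so $t_0=1$) and define $a_{-2}=0,b_{-2}=1,a_{-1}=1,b_{-1}=0$, $a_k=t_ka_{k-1}+a_{k-2}$, $b_k=t_kb_{k-1}+b_{k-2}$ for $k\ge0$. The convergents of $\theta$ are the fraction $1/0$ together with all fractions $\frac{t a_k+a_{k-1}}{t b_k+b_{k-1}}$ with $k\ge -1$ and $1\le t\le t_{k+1}$. For every convergent $A/B$, the number $|A-B\theta|$ is one of the values $\delta(n)$. *)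

theory Defs
  imports Complex_Main
begin

definition S_set :: "real \<Rightarrow> real set" where
  "S_set \<theta> = {real i + real j * \<theta> | i j :: nat. True}"

definition s_seq :: "real \<Rightarrow> nat \<Rightarrow> real" where
  "s_seq \<theta> n = (THE x. x \<in> S_set \<theta> \<and> card {y \<in> S_set \<theta>. y < x} = n)"

definition delta :: "real \<Rightarrow> nat \<Rightarrow> real" where
  "delta \<theta> n = s_seq \<theta> (Suc n) - s_seq \<theta> n"

definition lam :: "real \<Rightarrow> real \<Rightarrow> nat" where
  "lam \<theta> d = card (delta \<theta> ` {..< (LEAST k. delta \<theta> k = d)})"

fun cf_rem :: "real \<Rightarrow> nat \<Rightarrow> real" where
  "cf_rem \<theta> 0 = \<theta>"
| "cf_rem \<theta> (Suc k) = 1 / (cf_rem \<theta> k - of_int \<lfloor>cf_rem \<theta> k\<rfloor>)"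

definition cf_t :: "real \<Rightarrow> nat \<Rightarrow> int" where
  "cf_t \<theta> k = \<lfloor>cf_rem \<theta> k\<rfloor>"

text \<open>Shifted indices: cf_a theta (k+2) = a_k, so cf_a theta 0 = a_{-2}, cf_a theta 1 = a_{-1}.\<close>
fun cf_a :: "real \<Rightarrow> nat \<Rightarrow> int" where
  "cf_a \<theta> 0 = 0"
| "cf_a \<theta> (Suc 0) = 1"
| "cf_a \<theta> (Suc (Suc k)) = cf_t \<theta> k * cf_a \<theta> (Suc k) + cf_a \<theta> k"

fun cf_b :: "real \<Rightarrow> nat \<Rightarrow> int" where
  "cf_b \<theta> 0 = 1"
| "cf_b \<theta> (Suc 0) = 0"
| "cf_b \<theta> (Suc (Suc k)) = cf_t \<theta> k * cf_b \<theta> (Suc k) + cf_b \<theta> k"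

text \<open>(A,B) is a convergent: either 1/0, or (t a_k + a_{k-1})/(t b_k + b_{k-1})
  with k >= -1 and 1 <= t <= t_{k+1}.  Here j = k+1.\<close>
definition is_convergent :: "real \<Rightarrow> int \<Rightarrow> int \<Rightarrow> bool" where
  "is_convergent \<theta> A B \<longleftrightarrow> (A = 1 \<and> B = 0) \<or>
     (\<exists>j t. 1 \<le> t \<and> t \<le> cf_t \<theta> j \<and>
        A = t * cf_a \<theta> (Suc j) + cf_a \<theta> j \<and>
        B = t * cf_b \<theta> (Suc j) + cf_b \<theta> j)"

fun cf_val :: "nat list \<Rightarrow> real" where
  "cf_val [] = 0"
| "cf_val [c] = real c"
| "cf_val (c # d # cs) = real c + 1 / cf_val (d # cs)"

end

(*
  The gaps of S(theta) are read off the Stern-Brocot descent towards theta, which keeps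
  fractions a/b < theta < c/d with bc - ad = 1 and replaces the one with the larger error by
  the mediant. Each fraction of the pair is a best approximation on its side, so the successor
  of i + j theta in S(theta) is obtained by adding c - d theta or subtracting b theta - a for
  the pair whose denominators straddle j, resp. whose numerators straddle i. Hence every gap
  is |p - q theta| for a fraction p/q produced by the descent, the fraction produced at step m
  first appears as a gap at min p (q theta), and these points increase with m: the label of
  |p - q theta| is m. The descent spends t_k steps adding the k-th convergent to the
  intermediate fractions, so the fraction (t a_k + a_(k-1))/(t b_k + b_(k-1)) is produced at
  step t_0 + ... + t_k + t, the digit sum of its expansion [t_0; t_1, ..., t_k, t]; and the
  digit sum of a finite continued fraction does not depend on the chosen expansion.
*)

theory Submission
  imports Defs "HOL-Library.Product_Plus"
begin

section \<open>Finite continued fractions\<close>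

definition cf_digits :: "nat list \<Rightarrow> bool" where
  "cf_digits cs \<longleftrightarrow> cs \<noteq> [] \<and> (\<forall>c\<in>set cs. 1 \<le> c)"

lemma cf_val_Cons: "cs \<noteq> [] \<Longrightarrow> cf_val (c # cs) = real c + 1 / cf_val cs"
  by (cases cs) auto

lemma cf_val_gt_1:
  assumes "cf_digits cs" and "cs \<noteq> [1]"
  shows "cf_val cs > 1"
  using assms
proof (induction cs)
  case Nil
  then show ?case by (simp add: cf_digits_def)
next
  case (Cons c cs)
  show ?case
  proof (cases "cs = []")
    case True
    then show ?thesis using Cons.prems by (auto simp: cf_digits_def)
  next
    case False
    then have "cf_digits cs" using Cons.prems by (auto simp: cf_digits_def)
    then have "cf_val cs \<ge> 1" using Cons.IH by (cases "cs = [1]") auto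
    moreover have "real c \<ge> 1" using Cons.prems by (auto simp: cf_digits_def)
    moreover have "1 / cf_val cs > 0" using \<open>cf_val cs \<ge> 1\<close> by simp
    ultimately show ?thesis using cf_val_Cons[OF False, of c] by linarith
  qed
qed

lemma cf_val_short_eq_sum_list:
  "cs = [] \<or> cs = [1] \<Longrightarrow> cf_val (c # cs) = real (sum_list (c # cs))"
  by auto

lemma cf_val_between:
  assumes "cf_digits (c # cs)" and "cs \<noteq> []" and "cs \<noteq> [1]"
  shows "cf_digits cs" "cf_val (c # cs) = real c + 1 / cf_val cs"
    "real c < cf_val (c # cs)" "cf_val (c # cs) < real c + 1"
proof -
  show digits: "cf_digits cs" using assms by (auto simp: cf_digits_def)
  show eq: "cf_val (c # cs) = real c + 1 / cf_val cs" using cf_val_Cons[OF assms(2)] .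
  have "cf_val cs > 1" using cf_val_gt_1[OF digits assms(3)] .
  then show "real c < cf_val (c # cs)" "cf_val (c # cs) < real c + 1"
    unfolding eq by auto
qed

text \<open>Apart from [\<dots>, c, 1] = [\<dots>, c + 1], which preserves the digit sum, expansions are
  unique.\<close>
lemma cf_val_eq_imp_sum_list_eq:
  assumes "cf_digits cs" and "cf_digits cs'" and "cf_val cs = cf_val cs'"
  shows "sum_list cs = sum_list cs'"
  using assms
proof (induction cs arbitrary: cs')
  case Nil
  then show ?case by (simp add: cf_digits_def)
next
  case (Cons c r)
  obtain c' r' where cs': "cs' = c' # r'"
    using Cons.prems(2) by (cases cs') (auto simp: cf_digits_def)
  have same: "cf_val (c # r) = cf_val (c' # r')" using Cons.prems(3) cs' by simp
  have not_integral: "cf_val (d # l) \<noteq> real n"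
    if "cf_digits (d # l)" "\<not> (l = [] \<or> l = [1])" for d l and n :: nat
  proof
    assume "cf_val (d # l) = real n"
    then have "real d < real n" "real n < real d + 1"
      using cf_val_between[OF that(1)] that(2) by auto
    then have "d < n" "n < d + 1" by linarith+
    then show False by simp
  qed
  show ?case
  proof (cases "r = [] \<or> r = [1]"; cases "r' = [] \<or> r' = [1]")
    assume "r = [] \<or> r = [1]" and "r' = [] \<or> r' = [1]"
    then show ?thesis
      using same cs' cf_val_short_eq_sum_list[of r c] cf_val_short_eq_sum_list[of r' c'] by simp
  next
    assume "r = [] \<or> r = [1]" and "\<not> (r' = [] \<or> r' = [1])"
    then have False
      using same cf_val_short_eq_sum_list[of r c] not_integral[of c' r' "sum_list (c # r)"]
        Cons.prems(2) cs' by simp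
    then show ?thesis ..
  next
    assume "\<not> (r = [] \<or> r = [1])" and "r' = [] \<or> r' = [1]"
    then have False
      using same cf_val_short_eq_sum_list[of r' c'] not_integral[of c r "sum_list (c' # r')"]
        Cons.prems(1) by simp
    then show ?thesis ..
  next
    assume "\<not> (r = [] \<or> r = [1])" and "\<not> (r' = [] \<or> r' = [1])"
    then have "r \<noteq> []" "r \<noteq> [1]" "r' \<noteq> []" "r' \<noteq> [1]" by auto
    note A = cf_val_between[OF Cons.prems(1) \<open>r \<noteq> []\<close> \<open>r \<noteq> [1]\<close>]
    note B = cf_val_between[OF Cons.prems(2)[unfolded cs'] \<open>r' \<noteq> []\<close> \<open>r' \<noteq> [1]\<close>]
    have "real c < real c' + 1" "real c' < real c + 1" using A(3,4) B(3,4) same by linarith+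
    then have "c = c'" by linarith
    then have "1 / cf_val r = 1 / cf_val r'" using A(2) B(2) same by linarith
    then have "cf_val r = cf_val r'" by simp
    then show ?thesis using Cons.IH[OF A(1) B(1)] \<open>c = c'\<close> cs' by simp
  qed
qed

text \<open>The tuple (p, q, r, s) is the matrix product
  [[c0,1],[1,0]] \<cdots> [[cm,1],[1,0]] = [[p,q],[r,s]] for the digits c0, \<dots>, cm.\<close>
fun cf_mat :: "nat list \<Rightarrow> real \<times> real \<times> real \<times> real" where
  "cf_mat [] = (1, 0, 0, 1)"
| "cf_mat (c # cs) = (case cf_mat cs of (p, q, r, s) \<Rightarrow> (real c * p + r, real c * q + s, p, q))"

lemma cf_mat_snoc:
  "cf_mat (cs @ [c]) = (case cf_mat cs of (p, q, r, s) \<Rightarrow> (p * real c + q, p, r * real c + s, r))"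
  by (induction cs) (auto split: prod.splits simp: algebra_simps)

lemma cf_mat_nonneg:
  "\<forall>c\<in>set cs. 1 \<le> c \<Longrightarrow> cf_mat cs = (p, q, r, s) \<Longrightarrow> p \<ge> 1 \<and> q \<ge> 0 \<and> r \<ge> 0 \<and> s \<ge> 0"
proof (induction cs arbitrary: p q r s)
  case Nil
  then show ?case by simp
next
  case (Cons c cs)
  obtain p' q' r' s' where m: "cf_mat cs = (p', q', r', s')" by (metis prod.exhaust)
  have "p' \<ge> 1" "q' \<ge> 0" "r' \<ge> 0" "s' \<ge> 0" using Cons m by auto
  moreover have "real c \<ge> 1" using Cons.prems by simp
  moreover have "p = real c * p' + r'" "q = real c * q' + s'" "r = p'" "s = q'"
    using Cons.prems m by auto
  moreover have "real c * p' \<ge> 1 * 1" using calculation by (intro mult_mono) auto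
  ultimately show ?case by simp
qed

lemma cf_val_snoc:
  assumes "\<forall>c\<in>set cs. 1 \<le> c" and "x \<ge> 1" and "cf_mat cs = (p, q, r, s)"
  shows "cf_val (cs @ [x]) = (p * real x + q) / (r * real x + s)"
  using assms
proof (induction cs arbitrary: p q r s)
  case Nil
  then show ?case by simp
next
  case (Cons c cs)
  obtain p' q' r' s' where m: "cf_mat cs = (p', q', r', s')" by (metis prod.exhaust)
  have IH: "cf_val (cs @ [x]) = (p' * real x + q') / (r' * real x + s')" using Cons m by simp
  have "p' \<ge> 1" "q' \<ge> 0" using cf_mat_nonneg[OF _ m] Cons.prems by auto
  then have den: "p' * real x + q' > 0"
    using Cons.prems(2) by (simp add: add_pos_nonneg one_le_mult_iff)
  have "p = real c * p' + r'" "q = real c * q' + s'" "r = p'" "s = q'" using Cons.prems m by auto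
  then show ?case using IH den cf_val_Cons[of "cs @ [x]" c] by (simp add: field_simps)
qed

section \<open>Lattice vectors and best approximations\<close>

definition err :: "real \<Rightarrow> int \<times> int \<Rightarrow> real" where
  "err \<theta> v = of_int (fst v) - of_int (snd v) * \<theta>"

lemma err_Pair [simp]: "err \<theta> (p, q) = of_int p - of_int q * \<theta>"
  by (simp add: err_def)

lemma err_add: "err \<theta> (u + w) = err \<theta> u + err \<theta> w"
  by (simp add: err_def algebra_simps)

lemma err_eq_0_iff:
  assumes "\<theta> \<notin> \<rat>"
  shows "err \<theta> v = 0 \<longleftrightarrow> v = 0"
proof
  assume h: "err \<theta> v = 0"
  obtain p q where v: "v = (p, q)" by fastforce
  show "v = 0"
  proof (cases "q = 0")
    case True
    then show ?thesis using h v by (simp add: zero_prod_def)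
  next
    case False
    then have "\<theta> = of_int p / of_int q" using h v by (simp add: field_simps)
    then show ?thesis using assms by simp
  qed
qed (simp add: err_def)

lemma err_inj:
  assumes "\<theta> \<notin> \<rat>" and "err \<theta> u = err \<theta> w"
  shows "u = w"
proof -
  have "err \<theta> (u - w) = 0" using assms(2) by (simp add: err_def algebra_simps)
  then show ?thesis using err_eq_0_iff[OF assms(1)] by simp
qed

lemma unimodular_coords:
  fixes a b c d p q :: int
  assumes "b * c = a * d + 1"
  defines "\<alpha> \<equiv> q * c - p * d" and "\<beta> \<equiv> p * b - q * a"
  shows "p = \<alpha> * a + \<beta> * c" and "q = \<alpha> * b + \<beta> * d"
    and "err \<theta> (p, q) = of_int \<alpha> * err \<theta> (a, b) + of_int \<beta> * err \<theta> (c, d)"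
proof -
  have "\<alpha> * a + \<beta> * c = p * (b * c - a * d)" "\<alpha> * b + \<beta> * d = q * (b * c - a * d)"
    unfolding \<alpha>_def \<beta>_def by (simp_all add: algebra_simps)
  then show p: "p = \<alpha> * a + \<beta> * c" and q: "q = \<alpha> * b + \<beta> * d"
    using assms by simp_all
  have "err \<theta> (p, q) = err \<theta> (\<alpha> * a + \<beta> * c, \<alpha> * b + \<beta> * d)"
    using p q by simp
  also have "\<dots> = of_int \<alpha> * err \<theta> (a, b) + of_int \<beta> * err \<theta> (c, d)"
    by (simp add: algebra_simps)
  finally show "err \<theta> (p, q) = of_int \<alpha> * err \<theta> (a, b) + of_int \<beta> * err \<theta> (c, d)" .
qed

lemma upper_best_approx:
  fixes a b c d p q :: int
  assumes "1 \<le> b" "0 \<le> d" "b * c = a * d + 1" "err \<theta> (a, b) < 0" "0 < err \<theta> (c, d)"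
    and "0 \<le> q" "q < b + d" "0 < err \<theta> (p, q)"
  shows "err \<theta> (c, d) \<le> err \<theta> (p, q)"
proof -
  define \<alpha> where "\<alpha> = q * c - p * d"
  define \<beta> where "\<beta> = p * b - q * a"
  note coords = unimodular_coords[where p = p and q = q, OF assms(3), folded \<alpha>_def \<beta>_def]
  have "of_int q * \<theta> * of_int b < of_int p * of_int b"
    using assms(1,8) by (intro mult_strict_right_mono) auto
  moreover have "of_int q * of_int a \<le> of_int q * (\<theta> * of_int b)"
    using assms(4,6) by (intro mult_left_mono) (auto simp: mult.commute)
  ultimately have "real_of_int (q * a) < of_int (p * b)" by (simp add: mult.assoc)
  then have "\<beta> \<ge> 1" unfolding \<beta>_def by linarith
  show ?thesis
  proof (cases "\<alpha> \<le> 0")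
    case True
    then have "0 \<le> of_int \<alpha> * err \<theta> (a, b)" using assms(4) by (simp add: mult_nonpos_nonpos)
    moreover have "err \<theta> (c, d) \<le> of_int \<beta> * err \<theta> (c, d)"
      using \<open>\<beta> \<ge> 1\<close> assms(5) by (simp add: mult_le_cancel_right1)
    ultimately show ?thesis using coords(3)[of \<theta>] by linarith
  next
    case False
    then have "\<alpha> * b \<ge> 1 * b" "\<beta> * d \<ge> 1 * d"
      using assms(1,2) \<open>\<beta> \<ge> 1\<close> by (intro mult_right_mono; simp)+
    then show ?thesis using coords(2) assms(7) by linarith
  qed
qed

lemma lower_best_approx:
  fixes a b c d p q :: int
  assumes "0 \<le> a" "1 \<le> c" "0 \<le> d" "b * c = a * d + 1" "err \<theta> (a, b) < 0" "0 < err \<theta> (c, d)"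
    and "0 \<le> p" "0 \<le> q" "p < a + c" "err \<theta> (p, q) < 0"
  shows "- err \<theta> (a, b) \<le> - err \<theta> (p, q)"
proof -
  define \<alpha> where "\<alpha> = q * c - p * d"
  define \<beta> where "\<beta> = p * b - q * a"
  note coords = unimodular_coords[where p = p and q = q, OF assms(4), folded \<alpha>_def \<beta>_def]
  have pq: "of_int p < of_int q * \<theta>" using assms(10) by simp
  moreover have "0 \<le> real_of_int p" using assms(7) by simp
  ultimately have "0 < of_int q * \<theta>" by linarith
  then have "q \<noteq> 0" by auto
  then have "q > 0" using assms(8) by simp
  have "of_int p * of_int d \<le> of_int q * \<theta> * of_int d"
    using pq assms(3) by (intro mult_right_mono) auto
  moreover have "of_int q * (\<theta> * of_int d) < of_int q * of_int c"
    using \<open>q > 0\<close> assms(6) by (intro mult_strict_left_mono) (auto simp: mult.commute)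
  ultimately have "real_of_int (p * d) < of_int (q * c)" by (simp add: mult.assoc)
  then have "\<alpha> \<ge> 1" unfolding \<alpha>_def by linarith
  show ?thesis
  proof (cases "\<beta> \<le> 0")
    case True
    then have "of_int \<beta> * err \<theta> (c, d) \<le> 0" using assms(6) by (simp add: mult_nonpos_nonneg)
    moreover have "of_int \<alpha> * err \<theta> (a, b) \<le> err \<theta> (a, b)"
      using \<open>\<alpha> \<ge> 1\<close> assms(5) by (simp add: mult_le_cancel_right1)
    ultimately show ?thesis using coords(3)[of \<theta>] by linarith
  next
    case False
    then have "\<alpha> * a \<ge> 1 * a" "\<beta> * c \<ge> 1 * c"
      using assms(1,2) \<open>\<alpha> \<ge> 1\<close> by (intro mult_right_mono; simp)+
    then show ?thesis using coords(1) assms(9) by linarith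
  qed
qed

section \<open>The Stern-Brocot descent\<close>

text \<open>The Stern-Brocot descent towards \<theta>: the state holds fractions a/b < \<theta> < c/d as
  ((a, b), (c, d)), and the one with the larger error |a - b \<theta>| resp. c - d \<theta> is replaced
  by the mediant (a + c)/(b + d).\<close>
fun bracket :: "real \<Rightarrow> nat \<Rightarrow> (int \<times> int) \<times> (int \<times> int)" where
  "bracket \<theta> 0 = ((0, 1), (1, 0))"
| "bracket \<theta> (Suc n) = (case bracket \<theta> n of (u, w) \<Rightarrow>
     if - err \<theta> u < err \<theta> w then (u, u + w) else (u + w, w))"

definition upper_step :: "real \<Rightarrow> nat \<Rightarrow> bool" where
  "upper_step \<theta> n \<longleftrightarrow> - err \<theta> (fst (bracket \<theta> n)) < err \<theta> (snd (bracket \<theta> n))"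

lemma bracket_Suc_eq:
  assumes "bracket \<theta> n = (u, w)"
  shows "bracket \<theta> (Suc n) = (if upper_step \<theta> n then (u, u + w) else (u + w, w))"
  using assms by (simp add: upper_step_def)

lemma bracket_Suc:
  "bracket \<theta> (Suc n) = (if upper_step \<theta> n
     then (fst (bracket \<theta> n), fst (bracket \<theta> n) + snd (bracket \<theta> n))
     else (fst (bracket \<theta> n) + snd (bracket \<theta> n), snd (bracket \<theta> n)))"
  using bracket_Suc_eq[OF prod.collapse[symmetric]] .

declare bracket.simps(2) [simp del]

fun node :: "real \<Rightarrow> nat \<Rightarrow> int \<times> int" where
  "node \<theta> 0 = (1, 0)"
| "node \<theta> (Suc n) = fst (bracket \<theta> n) + snd (bracket \<theta> n)"

lemma node_in_bracket: "node \<theta> n = fst (bracket \<theta> n) \<or> node \<theta> n = snd (bracket \<theta> n)"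
  by (cases n) (auto simp: bracket_Suc)

lemma bracket_mem_node:
  "snd (bracket \<theta> n) \<in> range (node \<theta>) \<and>
   (fst (bracket \<theta> n) = (0, 1) \<or> fst (bracket \<theta> n) \<in> range (node \<theta>))"
proof (induction n)
  case 0
  show ?case by (simp add: range_eqI[of _ _ 0])
next
  case (Suc n)
  have "fst (bracket \<theta> n) + snd (bracket \<theta> n) \<in> range (node \<theta>)"
    by (simp add: range_eqI[of _ _ "Suc n"])
  then show ?case using Suc by (simp add: bracket_Suc)
qed

text \<open>The point of S(\<theta>) at which the gap |err \<theta> v| first occurs: for p > q \<theta> it is
  q \<theta>, followed by p + 0 \<theta>; for p < q \<theta> it is p, followed by 0 + q \<theta>.\<close>
definition onset :: "real \<Rightarrow> int \<times> int \<Rightarrow> real" where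
  "onset \<theta> v = min (of_int (fst v)) (of_int (snd v) * \<theta>)"

definition bracket_inv :: "real \<Rightarrow> (int \<times> int) \<times> (int \<times> int) \<Rightarrow> bool" where
  "bracket_inv \<theta> s \<longleftrightarrow> (case s of ((a, b), (c, d)) \<Rightarrow>
     0 \<le> a \<and> 1 \<le> b \<and> 1 \<le> c \<and> 0 \<le> d \<and> b * c = a * d + 1 \<and>
     err \<theta> (a, b) < 0 \<and> 0 < err \<theta> (c, d) \<and>
     (s = ((0, 1), (1, 0)) \<or> - err \<theta> (a, b) \<le> 1 \<and> err \<theta> (c, d) \<le> 1))"

locale irrational_slope =
  fixes \<theta> :: real
  assumes irrational: "\<theta> \<notin> \<rat>" and gt_1: "1 < \<theta>" and lt_2: "\<theta> < 2"
begin

lemma bracket_inv_holds: "bracket_inv \<theta> (bracket \<theta> n)"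
proof (induction n)
  case 0
  then show ?case using gt_1 by (simp add: bracket_inv_def)
next
  case (Suc n)
  obtain a b c d where s: "bracket \<theta> n = ((a, b), (c, d))" by (metis prod.exhaust)
  have I: "0 \<le> a" "1 \<le> b" "1 \<le> c" "0 \<le> d" "b * c = a * d + 1"
    "err \<theta> (a, b) < 0" "0 < err \<theta> (c, d)"
    "(a, b, c, d) = (0, 1, 1, 0) \<or> - err \<theta> (a, b) \<le> 1 \<and> err \<theta> (c, d) \<le> 1"
    using Suc s by (auto simp: bracket_inv_def)
  have "err \<theta> (a + c, b + d) \<noteq> 0"
    using err_eq_0_iff[OF irrational, of "(a + c, b + d)"] I by (auto simp: zero_prod_def)
  then consider "- err \<theta> (a, b) < err \<theta> (c, d)" "0 < err \<theta> (a + c, b + d)"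
    | "\<not> - err \<theta> (a, b) < err \<theta> (c, d)" "err \<theta> (a + c, b + d) < 0"
    using err_add[of \<theta> "(a, b)" "(c, d)"] by (cases "- err \<theta> (a, b) < err \<theta> (c, d)") auto
  then show ?case
  proof cases
    case 1
    then have "bracket \<theta> (Suc n) = ((a, b), (a + c, b + d))"
      using bracket_Suc_eq[OF s] by (simp add: upper_step_def s)
    then show ?thesis using 1 I gt_1 by (auto simp: bracket_inv_def algebra_simps)
  next
    case 2
    then have "bracket \<theta> (Suc n) = ((a + c, b + d), (c, d))"
      using bracket_Suc_eq[OF s] by (simp add: upper_step_def s)
    then show ?thesis using 2 I lt_2 by (auto simp: bracket_inv_def algebra_simps)
  qed
qed

lemma bracket_props:
  assumes "bracket \<theta> n = ((a, b), (c, d))"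
  shows "0 \<le> a" "1 \<le> b" "1 \<le> c" "0 \<le> d" "b * c = a * d + 1"
    and "err \<theta> (a, b) < 0" "0 < err \<theta> (c, d)"
    and "(a, b, c, d) = (0, 1, 1, 0) \<or> - err \<theta> (a, b) \<le> 1 \<and> err \<theta> (c, d) \<le> 1"
  using bracket_inv_holds[of n] assms by (auto simp: bracket_inv_def)

lemma node_nonneg: "1 \<le> fst (node \<theta> n) \<and> 0 \<le> snd (node \<theta> n)"
proof (cases n)
  case 0
  then show ?thesis by simp
next
  case (Suc m)
  obtain a b c d where s: "bracket \<theta> m = ((a, b), (c, d))" by (metis prod.exhaust)
  show ?thesis using bracket_props[OF s] s Suc by simp
qed

lemma abs_err_node_le_1: "\<bar>err \<theta> (node \<theta> n)\<bar> \<le> 1"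
proof -
  obtain a b c d where s: "bracket \<theta> n = ((a, b), (c, d))" by (metis prod.exhaust)
  note I = bracket_props[OF s]
  consider "node \<theta> n = (a, b)" | "node \<theta> n = (c, d)" using node_in_bracket[of \<theta> n] s by auto
  then show ?thesis
  proof cases
    case 1
    then have "a \<noteq> 0" using node_nonneg[of n] by auto
    then show ?thesis using 1 I(6,8) by auto
  next
    case 2
    then show ?thesis using I(7,8) by auto
  qed
qed

lemma onset_node_strict_mono: "strict_mono (\<lambda>n. onset \<theta> (node \<theta> n))"
proof (rule strict_mono_Suc_iff[THEN iffD2], intro allI)
  fix n
  obtain a b c d where s: "bracket \<theta> n = ((a, b), (c, d))" by (metis prod.exhaust)
  note I = bracket_props[OF s]
  have "onset \<theta> (node \<theta> n) \<le> of_int a \<or> onset \<theta> (node \<theta> n) \<le> of_int d * \<theta>"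
    using node_in_bracket[of \<theta> n] s by (auto simp: onset_def)
  moreover have "onset \<theta> (node \<theta> (Suc n)) = min (of_int a + of_int c) ((of_int b + of_int d) * \<theta>)"
    using s by (simp add: onset_def)
  moreover have "0 < of_int b * \<theta>" "0 \<le> of_int d * \<theta>" using I gt_1 by simp_all
  ultimately show "onset \<theta> (node \<theta> n) < onset \<theta> (node \<theta> (Suc n))"
    using I(1,6,7) s by (auto simp: algebra_simps)
qed

lemma abs_err_node_inj:
  assumes "\<bar>err \<theta> (node \<theta> k)\<bar> = \<bar>err \<theta> (node \<theta> m)\<bar>"
  shows "k = m"
proof -
  have "node \<theta> k = node \<theta> m"
  proof (cases "err \<theta> (node \<theta> k) = err \<theta> (node \<theta> m)")
    case True
    then show ?thesis using err_inj[OF irrational] by blast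
  next
    case False
    then have "err \<theta> (node \<theta> k + node \<theta> m) = 0" using assms by (auto simp: err_add abs_eq_iff)
    then have "node \<theta> k + node \<theta> m = 0" using err_eq_0_iff[OF irrational] by blast
    then show ?thesis using node_nonneg[of k] node_nonneg[of m] by (simp add: prod_eq_iff)
  qed
  then show ?thesis using strict_mono_eq[OF onset_node_strict_mono] by metis
qed

section \<open>The descent runs through the intermediate fractions\<close>

lemma cf_rem_irrational_gt_1: "cf_rem \<theta> k \<notin> \<rat> \<and> 1 < cf_rem \<theta> k"
proof (induction k)
  case 0
  then show ?case using irrational gt_1 by simp
next
  case (Suc k)
  define f where "f = cf_rem \<theta> k - of_int \<lfloor>cf_rem \<theta> k\<rfloor>"
  have "f \<notin> \<rat>"
    using Suc Rats_add[OF _ Rats_of_int[of "\<lfloor>cf_rem \<theta> k\<rfloor>"], of f] by (auto simp: f_def)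
  then have "f \<noteq> 0" by auto
  then have "0 < f" "f < 1" unfolding f_def by linarith+
  moreover have "1 / f \<notin> \<rat>" using \<open>f \<notin> \<rat>\<close> Rats_divide[OF Rats_1, of "1 / f"] by auto
  ultimately show ?case by (simp add: f_def)
qed

lemma cf_t_ge_1: "1 \<le> cf_t \<theta> k"
  using cf_rem_irrational_gt_1[of k] unfolding cf_t_def by linarith

lemma one_le_nat_cf_t: "1 \<le> nat (cf_t \<theta> k)"
  using nat_mono[OF cf_t_ge_1[of k]] by simp

lemma of_nat_less_cf_rem:
  assumes "int n \<le> cf_t \<theta> k"
  shows "real n < cf_rem \<theta> k"
proof -
  have "real n \<le> cf_rem \<theta> k" using assms unfolding cf_t_def by linarith
  moreover have "real n \<noteq> cf_rem \<theta> k" using cf_rem_irrational_gt_1[of k] by (metis Rats_of_nat)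
  ultimately show ?thesis by simp
qed

definition conv :: "nat \<Rightarrow> int \<times> int" where
  "conv k = (cf_a \<theta> k, cf_b \<theta> k)"

lemma err_conv_Suc_Suc:
  "err \<theta> (conv (Suc (Suc k))) = of_int (cf_t \<theta> k) * err \<theta> (conv (Suc k)) + err \<theta> (conv k)"
  by (simp add: conv_def algebra_simps)

lemma err_conv_ratio:
  "cf_rem \<theta> k * err \<theta> (conv (Suc k)) = - err \<theta> (conv k) \<and> 0 < (-1) ^ k * err \<theta> (conv (Suc k))"
proof (induction k)
  case 0
  then show ?case by (simp add: conv_def)
next
  case (Suc k)
  define x where "x = cf_rem \<theta> k"
  define f where "f = x - of_int (cf_t \<theta> k)"
  have "f \<noteq> 0"
    using cf_rem_irrational_gt_1[of k] Rats_add[OF _ Rats_of_int[of "cf_t \<theta> k"], of f]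
    by (auto simp: f_def x_def)
  moreover have "0 \<le> f" unfolding f_def x_def cf_t_def by linarith
  ultimately have "0 < f" by simp
  have next_err: "err \<theta> (conv (Suc (Suc k))) = - f * err \<theta> (conv (Suc k))"
    using err_conv_Suc_Suc[of k] Suc.IH by (simp add: f_def x_def algebra_simps)
  have "cf_rem \<theta> (Suc k) = 1 / f" by (simp add: f_def x_def cf_t_def)
  show ?case
  proof
    show "cf_rem \<theta> (Suc k) * err \<theta> (conv (Suc (Suc k))) = - err \<theta> (conv (Suc k))"
      using \<open>cf_rem \<theta> (Suc k) = 1 / f\<close> next_err \<open>0 < f\<close> by simp
    have "0 < f * ((-1) ^ k * err \<theta> (conv (Suc k)))" using Suc.IH \<open>0 < f\<close> by simp
    also have "\<dots> = (-1) ^ Suc k * err \<theta> (conv (Suc (Suc k)))"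
      using next_err by (simp add: mult.left_commute)
    finally show "0 < (-1) ^ Suc k * err \<theta> (conv (Suc (Suc k)))" .
  qed
qed

text \<open>In the notation of the paper, interm j t is (t a_k + a_(k-1), t b_k + b_(k-1)) with
  k = j - 1.\<close>
definition interm :: "nat \<Rightarrow> nat \<Rightarrow> int \<times> int" where
  "interm j t = (cf_a \<theta> j + int t * cf_a \<theta> (Suc j), cf_b \<theta> j + int t * cf_b \<theta> (Suc j))"

definition block_start :: "nat \<Rightarrow> nat" where
  "block_start j = (\<Sum>i<j. nat (cf_t \<theta> i))"

text \<open>During the j-th block of t_j steps the descent keeps conv (Suc j) and adds it to the
  other fraction, which runs through the intermediate fractions interm j t.\<close>
definition block_bracket :: "nat \<Rightarrow> nat \<Rightarrow> (int \<times> int) \<times> (int \<times> int)" where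
  "block_bracket j t = (if even j then (interm j t, conv (Suc j)) else (conv (Suc j), interm j t))"

lemma err_interm: "err \<theta> (interm j t) = - (cf_rem \<theta> j - real t) * err \<theta> (conv (Suc j))"
  using err_conv_ratio[of j] by (simp add: interm_def conv_def algebra_simps)

lemma interm_add_conv: "interm j t + conv (Suc j) = interm j (Suc t)"
  by (simp add: interm_def conv_def algebra_simps)

lemma block_step:
  assumes "Suc t \<le> nat (cf_t \<theta> j)" and "bracket \<theta> (block_start j + t) = block_bracket j t"
  shows "upper_step \<theta> (block_start j + t) \<longleftrightarrow> odd j"
    and "bracket \<theta> (Suc (block_start j + t)) = block_bracket j (Suc t)"
proof -
  define e where "e = err \<theta> (conv (Suc j))"
  have sign: "0 < (-1) ^ j * e" unfolding e_def using err_conv_ratio[of j] by simp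
  then have "0 < \<bar>e\<bar>" by auto
  moreover have gt: "real (Suc t) < cf_rem \<theta> j" using assms(1) by (intro of_nat_less_cf_rem) simp
  ultimately have "1 * \<bar>e\<bar> < (cf_rem \<theta> j - real t) * \<bar>e\<bar>"
    by (intro mult_strict_right_mono) auto
  then have larger: "\<bar>e\<bar> < \<bar>err \<theta> (interm j t)\<bar>"
    unfolding err_interm e_def[symmetric] using gt by (simp add: abs_mult)
  have "0 < (cf_rem \<theta> j - real t) * ((-1) ^ j * e)" using sign gt by simp
  moreover have "(-1) ^ j * err \<theta> (interm j t) = - ((cf_rem \<theta> j - real t) * ((-1) ^ j * e))"
    unfolding err_interm e_def by (simp add: algebra_simps)
  ultimately have opposite: "(-1) ^ j * err \<theta> (interm j t) < 0" by linarith
  show upper: "upper_step \<theta> (block_start j + t) \<longleftrightarrow> odd j"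
    using assms(2) larger sign opposite
    by (cases "even j") (simp_all add: upper_step_def block_bracket_def e_def)
  show "bracket \<theta> (Suc (block_start j + t)) = block_bracket j (Suc t)"
  proof (cases "even j")
    case True
    then have "bracket \<theta> (block_start j + t) = (interm j t, conv (Suc j))"
      using assms(2) by (simp add: block_bracket_def)
    from bracket_Suc_eq[OF this] show ?thesis
      using True upper by (simp add: block_bracket_def interm_add_conv)
  next
    case False
    then have "bracket \<theta> (block_start j + t) = (conv (Suc j), interm j t)"
      using assms(2) by (simp add: block_bracket_def)
    from bracket_Suc_eq[OF this] show ?thesis
      using False upper
      by (simp add: block_bracket_def add.commute[of "conv (Suc j)"] interm_add_conv)
  qed
qed

lemma bracket_within_block:
  assumes "bracket \<theta> (block_start j) = block_bracket j 0" and "t \<le> nat (cf_t \<theta> j)"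
  shows "bracket \<theta> (block_start j + t) = block_bracket j t"
  using assms(2)
proof (induction t)
  case 0
  then show ?case using assms(1) by simp
next
  case (Suc t)
  then show ?case using block_step(2)[of t j] by simp
qed

lemma bracket_block_start: "bracket \<theta> (block_start j) = block_bracket j 0"
proof (induction j)
  case 0
  then show ?case by (simp add: block_start_def block_bracket_def interm_def conv_def)
next
  case (Suc j)
  have "bracket \<theta> (block_start (Suc j)) = block_bracket j (nat (cf_t \<theta> j))"
    using bracket_within_block[OF Suc.IH, of "nat (cf_t \<theta> j)"] by (simp add: block_start_def)
  moreover have "interm j (nat (cf_t \<theta> j)) = conv (Suc (Suc j))" "interm (Suc j) 0 = conv (Suc j)"
    using cf_t_ge_1[of j] by (simp_all add: interm_def conv_def algebra_simps)
  ultimately show ?case by (simp add: block_bracket_def)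
qed

lemma bracket_block:
  "t \<le> nat (cf_t \<theta> j) \<Longrightarrow> bracket \<theta> (block_start j + t) = block_bracket j t"
  using bracket_within_block[OF bracket_block_start] .

lemma upper_step_block:
  "t < nat (cf_t \<theta> j) \<Longrightarrow> upper_step \<theta> (block_start j + t) \<longleftrightarrow> odd j"
  using block_step(1) bracket_block by simp

lemma node_block:
  assumes "1 \<le> t" and "t \<le> nat (cf_t \<theta> j)"
  shows "node \<theta> (block_start j + t) = interm j t"
proof -
  obtain s where t: "t = Suc s" using assms(1) by (cases t) auto
  have "bracket \<theta> (block_start j + s) = block_bracket j s"
    using assms(2) t by (intro bracket_block) simp
  then show ?thesis
    using t by (auto simp: block_bracket_def interm_add_conv add.commute[of "conv (Suc j)"])
qed

lemma block_start_ge: "j \<le> block_start j"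
proof -
  have "(\<Sum>i<j. 1) \<le> block_start j"
    unfolding block_start_def using one_le_nat_cf_t by (intro sum_mono)
  then show ?thesis by simp
qed

lemma upper_step_frequently: "\<exists>n\<ge>N. upper_step \<theta> n"
  using upper_step_block[of 0 "Suc (2 * N)"] block_start_ge[of "Suc (2 * N)"]
    cf_t_ge_1[of "Suc (2 * N)"]
  by (intro exI[of _ "block_start (Suc (2 * N))"]) simp

lemma lower_step_frequently: "\<exists>n\<ge>N. \<not> upper_step \<theta> n"
  using upper_step_block[of 0 "2 * N"] block_start_ge[of "2 * N"] cf_t_ge_1[of "2 * N"]
  by (intro exI[of _ "block_start (2 * N)"]) simp

end

lemma int_seq_crossing:
  fixes f g :: "nat \<Rightarrow> int"
  assumes "f 0 \<le> j" and "\<And>n. 0 < g n" and "\<And>n. f (Suc n) = f n + (if P n then g n else 0)"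
    and "\<And>N. \<exists>n\<ge>N. P n"
  shows "\<exists>n. f n \<le> j \<and> j < f n + g n"
proof -
  have "mono f" using assms(2,3) by (intro monoI[OF lift_Suc_mono_le]) (simp add: less_imp_le)
  have "\<exists>n. f 0 + int k \<le> f n" for k
  proof (induction k)
    case 0
    then show ?case by auto
  next
    case (Suc k)
    then obtain N where "f 0 + int k \<le> f N" by blast
    moreover obtain n where "n \<ge> N" "P n" using assms(4) by blast
    moreover have "f N \<le> f n" using \<open>n \<ge> N\<close> \<open>mono f\<close> by (simp add: monoD)
    ultimately show ?case using assms(2,3)[of n] by (intro exI[of _ "Suc n"]) simp
  qed
  then obtain n where "f 0 + int (nat (j - f 0 + 1)) \<le> f n" by blast
  then have ex: "\<exists>n. j < f n" by (intro exI[of _ n]) linarith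
  define m where "m = (LEAST n. j < f n)"
  have "j < f m" unfolding m_def using LeastI_ex[OF ex] .
  then obtain n where n: "m = Suc n" using assms(1) by (cases m) auto
  have "f n \<le> j" using not_less_Least[of n "\<lambda>n. j < f n"] n m_def by simp
  then show ?thesis using assms(3)[of n] \<open>j < f m\<close> n by (auto split: if_splits)
qed

context irrational_slope
begin

lemma upper_den_crossing:
  assumes "0 \<le> j"
  obtains n a b c d where "bracket \<theta> n = ((a, b), (c, d))" "d \<le> j" "j < b + d"
proof -
  have "\<exists>n. snd (snd (bracket \<theta> n)) \<le> j \<and> j < snd (snd (bracket \<theta> n)) + snd (fst (bracket \<theta> n))"
  proof (rule int_seq_crossing[where P = "upper_step \<theta>"])
    show "0 < snd (fst (bracket \<theta> n))" for n
      by (metis bracket_props(2) prod.collapse zero_less_one order_less_le_trans)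
  qed (use assms upper_step_frequently in \<open>simp_all add: bracket_Suc\<close>)
  then show ?thesis using that by (metis add.commute prod.collapse)
qed

lemma lower_num_crossing:
  assumes "0 \<le> i"
  obtains n a b c d where "bracket \<theta> n = ((a, b), (c, d))" "a \<le> i" "i < a + c"
proof -
  have "\<exists>n. fst (fst (bracket \<theta> n)) \<le> i \<and> i < fst (fst (bracket \<theta> n)) + fst (snd (bracket \<theta> n))"
  proof (rule int_seq_crossing[where P = "\<lambda>n. \<not> upper_step \<theta> n"])
    show "0 < fst (snd (bracket \<theta> n))" for n
      by (metis bracket_props(3) prod.collapse zero_less_one order_less_le_trans)
  qed (use assms lower_step_frequently in \<open>simp_all add: bracket_Suc\<close>)
  then show ?thesis using that by (metis prod.collapse)
qed

end

section \<open>Gaps of S(\<theta>)\<close>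

lemma S_set_memI: "real i + real j * \<theta> \<in> S_set \<theta>"
  unfolding S_set_def by blast

lemma S_set_memI_int: "0 \<le> i \<Longrightarrow> 0 \<le> j \<Longrightarrow> of_int i + of_int j * \<theta> \<in> S_set \<theta>"
  using S_set_memI[of "nat i" "nat j" \<theta>] by simp

lemma S_set_memE:
  assumes "y \<in> S_set \<theta>"
  obtains i j :: nat where "y = real i + real j * \<theta>"
  using assms unfolding S_set_def by blast

lemma S_set_add_1:
  assumes "y \<in> S_set \<theta>"
  shows "y + 1 \<in> S_set \<theta>"
proof -
  obtain i j where "y = real i + real j * \<theta>" using assms by (rule S_set_memE)
  then show ?thesis using S_set_memI[of "Suc i" j \<theta>] by (simp add: algebra_simps)
qed

context irrational_slope
begin

lemma S_set_nonneg: "y \<in> S_set \<theta> \<Longrightarrow> 0 \<le> y"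
  using gt_1 by (auto elim!: S_set_memE)

lemma finite_S_set_below: "finite {y \<in> S_set \<theta>. y < x}"
proof -
  let ?N = "nat \<lceil>x\<rceil>"
  have "{y \<in> S_set \<theta>. y < x} \<subseteq> (\<lambda>(i, j). real i + real j * \<theta>) ` ({..?N} \<times> {..?N})"
  proof
    fix y assume "y \<in> {y \<in> S_set \<theta>. y < x}"
    then obtain i j where y: "y = real i + real j * \<theta>" "y < x" by (auto elim!: S_set_memE)
    have "real j * 1 \<le> real j * \<theta>" using gt_1 by (intro mult_left_mono) auto
    then have "i \<le> ?N" "j \<le> ?N" using y gt_1 by (simp_all add: le_nat_iff) linarith+
    then show "y \<in> (\<lambda>(i, j). real i + real j * \<theta>) ` ({..?N} \<times> {..?N})" using y by force
  qed
  then show ?thesis by (rule finite_subset) auto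
qed

definition rank :: "real \<Rightarrow> nat" where
  "rank x = card {y \<in> S_set \<theta>. y < x}"

text \<open>The bound y + 1 makes the set finite, and nonempty since y + 1 \<in> S(\<theta>).\<close>
definition next_S :: "real \<Rightarrow> real" where
  "next_S y = Min {z \<in> S_set \<theta>. y < z \<and> z \<le> y + 1}"

lemma next_S:
  assumes "y \<in> S_set \<theta>"
  shows "next_S y \<in> S_set \<theta>" "y < next_S y" "next_S y \<le> y + 1"
    and "\<And>z. z \<in> S_set \<theta> \<Longrightarrow> y < z \<Longrightarrow> next_S y \<le> z"
proof -
  let ?A = "{z \<in> S_set \<theta>. y < z \<and> z \<le> y + 1}"
  have fin: "finite ?A" using finite_S_set_below[of "y + 2"] by (rule finite_subset[rotated]) auto
  have "y + 1 \<in> ?A" using S_set_add_1[OF assms] by simp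
  then have m: "next_S y \<in> ?A" unfolding next_S_def using Min_in[OF fin] by blast
  then show "next_S y \<in> S_set \<theta>" "y < next_S y" "next_S y \<le> y + 1" by auto
  fix z assume "z \<in> S_set \<theta>" "y < z"
  then show "next_S y \<le> z"
    using m Min_le[OF fin, of z] unfolding next_S_def by (cases "z \<le> y + 1") auto
qed

lemma rank_strict_mono: "x \<in> S_set \<theta> \<Longrightarrow> x < x' \<Longrightarrow> rank x < rank x'"
  unfolding rank_def by (rule psubset_card_mono[OF finite_S_set_below]) auto

lemma rank_less_iff: "x \<in> S_set \<theta> \<Longrightarrow> x' \<in> S_set \<theta> \<Longrightarrow> rank x < rank x' \<longleftrightarrow> x < x'"
  using rank_strict_mono by (metis less_asym linorder_neqE)

lemma rank_inj: "x \<in> S_set \<theta> \<Longrightarrow> x' \<in> S_set \<theta> \<Longrightarrow> rank x = rank x' \<Longrightarrow> x = x'"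
  using rank_strict_mono by (metis less_irrefl linorder_neqE)

lemma rank_next_S: "y \<in> S_set \<theta> \<Longrightarrow> rank (next_S y) = Suc (rank y)"
proof -
  assume y: "y \<in> S_set \<theta>"
  have "{z \<in> S_set \<theta>. z < next_S y} = insert y {z \<in> S_set \<theta>. z < y}"
    using next_S[OF y] y by force
  then show ?thesis unfolding rank_def using finite_S_set_below[of y] by simp
qed

lemma rank_surj: "\<exists>x\<in>S_set \<theta>. rank x = n"
proof (induction n)
  case 0
  have "{y \<in> S_set \<theta>. y < 0} = {}" using S_set_nonneg by force
  then have "rank 0 = 0" unfolding rank_def by (simp only: card.empty)
  then show ?case using S_set_memI[of 0 0 \<theta>] by auto
next
  case (Suc n)
  then show ?case using next_S(1) rank_next_S by blast
qed

lemma s_seq_rank: "x \<in> S_set \<theta> \<Longrightarrow> s_seq \<theta> (rank x) = x"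
  unfolding s_seq_def using rank_inj by (intro the_equality) (auto simp: rank_def)

lemma s_seq_mem: "s_seq \<theta> n \<in> S_set \<theta> \<and> rank (s_seq \<theta> n) = n"
  using rank_surj[of n] s_seq_rank by auto

definition gap :: "real \<Rightarrow> real" where
  "gap y = next_S y - y"

lemma delta_eq_gap: "delta \<theta> n = gap (s_seq \<theta> n)"
proof -
  have "s_seq \<theta> (Suc n) = next_S (s_seq \<theta> n)"
    using s_seq_mem[of n] s_seq_rank[of "next_S (s_seq \<theta> n)"] rank_next_S next_S(1) by metis
  then show ?thesis by (simp add: delta_def gap_def)
qed

lemma gap_le: "y \<in> S_set \<theta> \<Longrightarrow> y + e \<in> S_set \<theta> \<Longrightarrow> 0 < e \<Longrightarrow> gap y \<le> e"
  using next_S(4)[of y "y + e"] by (simp add: gap_def)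

text \<open>The successor of y = i + j \<theta> is y + (p - q \<theta>) or y - (p - q \<theta>) with p, q \<ge> 0;
  if instead it is y + p + q \<theta> with p, q \<ge> 0, the gap is at least 1, hence equal to 1.\<close>
lemma gap_cases:
  assumes "y = real i + real j * \<theta>"
  obtains "gap y = 1"
  | p q where "1 \<le> q" "q \<le> int j" "0 \<le> p" "0 < err \<theta> (p, q)" "gap y = err \<theta> (p, q)"
  | p q where "1 \<le> p" "p \<le> int i" "0 \<le> q" "err \<theta> (p, q) < 0" "gap y = - err \<theta> (p, q)"
proof -
  have yS: "y \<in> S_set \<theta>" using assms S_set_memI by simp
  obtain i' j' where n: "next_S y = real i' + real j' * \<theta>"
    using next_S(1)[OF yS] by (rule S_set_memE)
  define p where "p = int i' - int i"
  define q where "q = int j' - int j"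
  have g: "gap y = of_int p + of_int q * \<theta>"
    unfolding gap_def p_def q_def n using assms by (simp add: algebra_simps)
  have "0 < gap y" "gap y \<le> 1" using next_S(2,3)[OF yS] by (simp_all add: gap_def)
  consider "q < 0" | "0 \<le> q" "p < 0" | "0 \<le> q" "0 \<le> p" by linarith
  then show ?thesis
  proof cases
    case 1
    then have "0 \<le> p" using g \<open>0 < gap y\<close> gt_1
      by (smt (verit) mult_less_0_iff of_int_less_0_iff)
    moreover have "1 \<le> - q" "- q \<le> int j" using 1 q_def by auto
    ultimately show ?thesis using that(2)[of "- q" p] g \<open>0 < gap y\<close> by simp
  next
    case 2
    moreover have "1 \<le> - p" "- p \<le> int i" using 2 p_def by auto
    ultimately show ?thesis using that(3)[of "- p" q] g \<open>0 < gap y\<close> by simp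
  next
    case 3
    then have "1 \<le> p + q" using g \<open>0 < gap y\<close> by (cases "p = 0 \<and> q = 0") auto
    moreover have "of_int q * 1 \<le> of_int q * \<theta>" using 3 gt_1 by (intro mult_left_mono) auto
    ultimately have "1 \<le> gap y" using g by linarith
    then show ?thesis using that(1) \<open>gap y \<le> 1\<close> by simp
  qed
qed

lemma gap_eq_abs_err_node:
  assumes "y \<in> S_set \<theta>"
  obtains k where "gap y = \<bar>err \<theta> (node \<theta> k)\<bar>" "onset \<theta> (node \<theta> k) \<le> y"
proof -
  obtain i j where y: "y = real i + real j * \<theta>" using assms by (rule S_set_memE)
  have "0 \<le> real j * \<theta>" using gt_1 by simp
  from y show ?thesis
  proof (cases rule: gap_cases)
    case 1
    then show ?thesis using that[of 0] assms S_set_nonneg by (simp add: onset_def)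
  next
    case (2 p q)
    obtain n a b c d where s: "bracket \<theta> n = ((a, b), (c, d))" and j: "d \<le> int j" "int j < b + d"
      by (rule upper_den_crossing[of "int j"]) auto
    note I = bracket_props[OF s]
    have "err \<theta> (c, d) \<le> gap y"
      using upper_best_approx[OF I(2,4,5,6,7), of q p] 2 j by simp
    moreover have "y + err \<theta> (c, d) \<in> S_set \<theta>"
      using S_set_memI_int[of "int i + c" "int j - d" \<theta>] I j y by (simp add: algebra_simps)
    then have "gap y \<le> err \<theta> (c, d)" using gap_le[OF assms] I(7) by blast
    moreover obtain k where "node \<theta> k = (c, d)" using bracket_mem_node[of \<theta> n] s by auto
    moreover have "of_int d * \<theta> \<le> real j * \<theta>" using j gt_1 by (intro mult_right_mono) auto
    then have "onset \<theta> (c, d) \<le> y" using y by (simp add: onset_def min_le_iff_disj)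
    ultimately show ?thesis using that[of k] I(7) by auto
  next
    case (3 p q)
    obtain n a b c d where s: "bracket \<theta> n = ((a, b), (c, d))" and i: "a \<le> int i" "int i < a + c"
      by (rule lower_num_crossing[of "int i"]) auto
    note I = bracket_props[OF s]
    have "- err \<theta> (a, b) \<le> gap y"
      using lower_best_approx[OF I(1,3,4,5,6,7), of p q] 3 i by simp
    moreover have "y + - err \<theta> (a, b) \<in> S_set \<theta>"
      using S_set_memI_int[of "int i - a" "int j + b" \<theta>] I i y by (simp add: algebra_simps)
    then have "gap y \<le> - err \<theta> (a, b)" using gap_le[OF assms] I(6) by simp
    moreover have "(a, b) \<noteq> (0, 1)"
      using calculation 3 next_S(3)[OF assms] gt_1 by (auto simp: gap_def)
    then obtain k where "node \<theta> k = (a, b)" using bracket_mem_node[of \<theta> n] s by auto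
    moreover have "onset \<theta> (a, b) \<le> y"
      using i y \<open>0 \<le> real j * \<theta>\<close> by (simp add: onset_def min_le_iff_disj)
    ultimately show ?thesis using that[of k] I(6) by auto
  qed
qed

lemma onset_node_mem: "onset \<theta> (node \<theta> m) \<in> S_set \<theta>"
  using node_nonneg[of m] S_set_memI_int[of "fst (node \<theta> m)" 0 \<theta>]
    S_set_memI_int[of 0 "snd (node \<theta> m)" \<theta>]
  by (simp add: onset_def min_def)

lemma gap_onset_node: "gap (onset \<theta> (node \<theta> m)) = \<bar>err \<theta> (node \<theta> m)\<bar>"
proof -
  obtain a b c d where s: "bracket \<theta> m = ((a, b), (c, d))" by (metis prod.exhaust)
  note I = bracket_props[OF s]
  define y where "y = onset \<theta> (node \<theta> m)"
  have yS: "y \<in> S_set \<theta>" unfolding y_def by (rule onset_node_mem)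
  have le_1: "\<bar>err \<theta> (node \<theta> m)\<bar> \<le> 1" by (rule abs_err_node_le_1)
  consider "node \<theta> m = (c, d)" | "node \<theta> m = (a, b)" using node_in_bracket[of \<theta> m] s by auto
  then show ?thesis
  proof cases
    case 1
    then have y: "y = real 0 + real (nat d) * \<theta>" using I(4,7) by (simp add: y_def onset_def min_def)
    have "y + err \<theta> (c, d) \<in> S_set \<theta>" using S_set_memI_int[of c 0 \<theta>] y I(3,4) by simp
    then have "gap y \<le> err \<theta> (c, d)" using gap_le[OF yS] I(7) by blast
    moreover have "err \<theta> (c, d) \<le> gap y"
      using y
    proof (cases rule: gap_cases)
      case 1
      then show ?thesis using le_1 \<open>node \<theta> m = (c, d)\<close> by simp
    next
      case (2 p q)
      then show ?thesis using upper_best_approx[OF I(2,4,5,6,7), of q p] I(2,4) by simp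
    qed simp
    ultimately show ?thesis using 1 I(7) by (simp add: y_def)
  next
    case 2
    then have y: "y = real (nat a) + real 0 * \<theta>" using I(1,6) by (simp add: y_def onset_def min_def)
    have "y + - err \<theta> (a, b) \<in> S_set \<theta>" using S_set_memI_int[of 0 b \<theta>] y I(1,2) by simp
    then have "gap y \<le> - err \<theta> (a, b)" using gap_le[OF yS] I(6) by simp
    moreover have "- err \<theta> (a, b) \<le> gap y"
      using y
    proof (cases rule: gap_cases)
      case 1
      then show ?thesis using le_1 \<open>node \<theta> m = (a, b)\<close> by simp
    next
      case (3 p q)
      then show ?thesis using lower_best_approx[OF I(1,3,4,5,6,7), of p q] I(1,3) by simp
    qed simp
    ultimately show ?thesis using 2 I(6) by (simp add: y_def)
  qed
qed

section \<open>Labels of the nodes\<close>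

lemma delta_rank_onset: "delta \<theta> (rank (onset \<theta> (node \<theta> m))) = \<bar>err \<theta> (node \<theta> m)\<bar>"
  using delta_eq_gap s_seq_rank[OF onset_node_mem] gap_onset_node by simp

lemma onset_node_less_iff: "onset \<theta> (node \<theta> k) < onset \<theta> (node \<theta> m) \<longleftrightarrow> k < m"
  using strict_mono_less[OF onset_node_strict_mono] by simp

lemma delta_before_rank_onset:
  assumes "k < rank (onset \<theta> (node \<theta> m))"
  obtains k' where "k' < m" "delta \<theta> k = \<bar>err \<theta> (node \<theta> k')\<bar>"
proof -
  have y: "s_seq \<theta> k \<in> S_set \<theta>" "rank (s_seq \<theta> k) = k" using s_seq_mem by auto
  obtain k' where k': "gap (s_seq \<theta> k) = \<bar>err \<theta> (node \<theta> k')\<bar>" "onset \<theta> (node \<theta> k') \<le> s_seq \<theta> k"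
    using gap_eq_abs_err_node[OF y(1)] by blast
  have "s_seq \<theta> k < onset \<theta> (node \<theta> m)"
    using rank_less_iff[OF y(1) onset_node_mem] y(2) assms by simp
  then have "k' < m" using k'(2) onset_node_less_iff by fastforce
  then show ?thesis using that k'(1) delta_eq_gap by simp
qed

lemma lam_node: "lam \<theta> \<bar>err \<theta> (node \<theta> m)\<bar> = m"
proof -
  define v where "v k = \<bar>err \<theta> (node \<theta> k)\<bar>" for k
  define K where "K = rank (onset \<theta> (node \<theta> m))"
  have first: "(LEAST k. delta \<theta> k = v m) = K"
  proof (rule Least_equality)
    show "delta \<theta> K = v m" unfolding K_def v_def by (rule delta_rank_onset)
    show "K \<le> k" if "delta \<theta> k = v m" for k
    proof (rule ccontr)
      assume "\<not> K \<le> k"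
      then have "k < rank (onset \<theta> (node \<theta> m))" unfolding K_def by simp
      then obtain k' where "k' < m" "delta \<theta> k = v k'"
        unfolding v_def by (rule delta_before_rank_onset)
      then show False using that abs_err_node_inj unfolding v_def by force
    qed
  qed
  have "delta \<theta> ` {..<K} = v ` {..<m}"
  proof
    show "delta \<theta> ` {..<K} \<subseteq> v ` {..<m}"
    proof
      fix x assume "x \<in> delta \<theta> ` {..<K}"
      then obtain k where "k < rank (onset \<theta> (node \<theta> m))" "x = delta \<theta> k" unfolding K_def by auto
      then show "x \<in> v ` {..<m}" unfolding v_def by (auto elim: delta_before_rank_onset)
    qed
    show "v ` {..<m} \<subseteq> delta \<theta> ` {..<K}"
    proof
      fix x assume "x \<in> v ` {..<m}"
      then obtain k' where k': "k' < m" "x = v k'" by auto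
      then have "rank (onset \<theta> (node \<theta> k')) < K"
        unfolding K_def using rank_less_iff[OF onset_node_mem onset_node_mem] onset_node_less_iff
        by simp
      then show "x \<in> delta \<theta> ` {..<K}"
        using k' delta_rank_onset[of k'] unfolding v_def
        by (intro image_eqI[of _ _ "rank (onset \<theta> (node \<theta> k'))"]) auto
    qed
  qed
  moreover have "inj_on v {..<m}" using abs_err_node_inj unfolding v_def by (auto simp: inj_on_def)
  ultimately show ?thesis unfolding lam_def first v_def[symmetric] by (simp add: card_image)
qed

section \<open>Labels of convergents\<close>

definition cf_prefix :: "nat \<Rightarrow> nat list" where
  "cf_prefix j = map (\<lambda>i. nat (cf_t \<theta> i)) [0..<j]"

lemma cf_mat_cf_prefix:
  "cf_mat (cf_prefix j) =
     (of_int (cf_a \<theta> (Suc j)), of_int (cf_a \<theta> j), of_int (cf_b \<theta> (Suc j)), of_int (cf_b \<theta> j))"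
proof (induction j)
  case 0
  then show ?case by (simp add: cf_prefix_def)
next
  case (Suc j)
  have "real (nat (cf_t \<theta> j)) = of_int (cf_t \<theta> j)" using cf_t_ge_1[of j] by simp
  then show ?case using Suc by (simp add: cf_prefix_def cf_mat_snoc algebra_simps)
qed

lemma cf_val_interm:
  assumes "1 \<le> t"
  shows "cf_val (cf_prefix j @ [t]) = of_int (fst (interm j t)) / of_int (snd (interm j t))"
proof -
  have "\<forall>c\<in>set (cf_prefix j). 1 \<le> c" using one_le_nat_cf_t by (auto simp: cf_prefix_def)
  from cf_val_snoc[OF this assms cf_mat_cf_prefix] show ?thesis
    by (simp add: interm_def algebra_simps)
qed

lemma sum_list_cf_prefix: "sum_list (cf_prefix j) = block_start j"
  by (simp add: cf_prefix_def block_start_def sum_list_sum_nth atLeast0LessThan)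

lemma lam_convergent:
  assumes "is_convergent \<theta> A B" and "\<not> (A = 1 \<and> B = 0)"
    and "cf_digits cs" and "cf_val cs = of_int A / of_int B"
  shows "lam \<theta> \<bar>of_int A - of_int B * \<theta>\<bar> = sum_list cs"
proof -
  obtain j t where jt: "1 \<le> t" "t \<le> cf_t \<theta> j"
    "A = t * cf_a \<theta> (Suc j) + cf_a \<theta> j" "B = t * cf_b \<theta> (Suc j) + cf_b \<theta> j"
    using assms(1,2) unfolding is_convergent_def by blast
  define n where "n = nat t"
  have n: "1 \<le> n" "n \<le> nat (cf_t \<theta> j)" and AB: "(A, B) = interm j n"
    using jt by (auto simp: n_def interm_def algebra_simps)
  have "lam \<theta> \<bar>of_int A - of_int B * \<theta>\<bar> = block_start j + n"
    using lam_node[of "block_start j + n"] node_block[OF n] AB[symmetric] by simp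
  also have "\<dots> = sum_list (cf_prefix j @ [n])" by (simp add: sum_list_cf_prefix)
  also have "\<dots> = sum_list cs"
  proof (rule cf_val_eq_imp_sum_list_eq)
    show "cf_digits (cf_prefix j @ [n])"
      using n one_le_nat_cf_t by (auto simp: cf_digits_def cf_prefix_def)
    show "cf_val (cf_prefix j @ [n]) = cf_val cs"
      using cf_val_interm[OF n(1)] AB assms(4) by (metis fst_conv snd_conv)
  qed (rule assms(3))
  finally show ?thesis .
qed

end

theorem mainTheorem13:
  fixes \<theta> :: real
  assumes "\<theta> \<notin> \<rat>" and "1 < \<theta>" and "\<theta> < 2"
  shows "(\<forall>A B cs. is_convergent \<theta> A B \<and> \<not> (A = 1 \<and> B = 0) \<and>
             cs \<noteq> [] \<and> (\<forall>c \<in> set cs. 1 \<le> c) \<and>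
             cf_val cs = real_of_int A / real_of_int B
           \<longrightarrow> lam \<theta> \<bar>real_of_int A - real_of_int B * \<theta>\<bar> = sum_list cs)
         \<and> lam \<theta> \<bar>1 - 0 * \<theta>\<bar> = 0"
proof -
  interpret irrational_slope \<theta> using assms by unfold_locales
  have "lam \<theta> \<bar>1 - 0 * \<theta>\<bar> = 0" using lam_node[of 0] by simp
  then show ?thesis using lam_convergent by (auto simp: cf_digits_def)
qed

end
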